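(* Let $\mathcal T$ be a local type with encoding dimension $d$. The equality function $\mathcal T\times\mathcal T\to\mathrm{Bool}$, $(x,y)\mapsto[x=y]$, is representable in $\mathrm{ResMLP}(2d,2)$.
   Context: A local type $\mathcal T$ is a finite set $S$ together with an injective encoding $\phi_{\mathcal T}:S\to\mathbb{R}^{d_{\mathcal T}}$. The product type $\mathcal T_1\times\dots\times\mathcal T_n$ has underlying set $S_1\times\dots\times S_n$ and encoding $(s_1,\dots,s_n)\mapsto\phi_1(s_1)\oplus\dots\oplus\phi_n(s_n)$ (concatenation), of dimension $\sum d_i$. $\mathrm{Bool}$ is the local type $\{\mathrm{false},\mathrm{true}\}$ encoded in $\mathbb{R}^1$ by $\mathrm{false}\mapsto0$, $\mathrm{true}\mapsto1$. A single-layer fully connected network of dimension $d$ is $f_{\mathrm{fcn}}(X)=W_2\,\mathrm{ReLU}(W_1X+B_1)+B_2$ with $W_1\in\mathbb{R}^{4d\times d}$, $B_1\in\mathbb{R}^{4d}$, $W_2\in\mathbb{R}^{d\times 4d}$, $B_2\in\mathbb{R}^d$. $\mathrm{ResMLP}(d,L)$ is the set of maps $X\mapsto X^{(L)}$ with $X^{(0)}=X$, $X^{(l)}=X^{(l-1)}+f^{(l)}_{\mathrm{fcn}}(X^{(l-1)})$. A function $f:\mathcal T\to\mathcal R$ between local types is representable in $\mathrm{ResMLP}(d,L)$ ($d\ge\max(d_{\mathcal T},d_{\mathcal R})$) if there is $\tilde f\in\mathrm{ResMLP}(d,L)$ with $\iota_1\circ\phi_{\mathcal R}\circ f=\tilde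 f\circ\iota_2\circ\phi_{\mathcal T}$, where $\iota_1,\iota_2$ pad with zeros into $\mathbb{R}^d$. *)

theory Defs
  imports Complex_Main
begin

text \<open>Vectors in R^n are modelled as functions nat \<Rightarrow> real whose entries at
indices \<ge> n are zero; matrices as nat \<Rightarrow> nat \<Rightarrow> real, of which only the
entries with indices in range are read. Zero-padding into R^d is then the identity.\<close>

definition supported_in :: "nat \<Rightarrow> (nat \<Rightarrow> real) \<Rightarrow> bool" where
  "supported_in n x \<longleftrightarrow> (\<forall>i\<ge>n. x i = 0)"

definition local_type :: "'a set \<Rightarrow> ('a \<Rightarrow> nat \<Rightarrow> real) \<Rightarrow> nat \<Rightarrow> bool" where
  "local_type S enc d \<longleftrightarrow> finite S \<and> inj_on enc S \<and> (\<forall>s\<in>S. supported_in d (enc s))"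

definition vconcat :: "nat \<Rightarrow> (nat \<Rightarrow> real) \<Rightarrow> (nat \<Rightarrow> real) \<Rightarrow> nat \<Rightarrow> real" where
  "vconcat m x y = (\<lambda>i. if i < m then x i else y (i - m))"

definition prod_enc :: "nat \<Rightarrow> ('a \<Rightarrow> nat \<Rightarrow> real) \<Rightarrow> ('a \<times> 'a) \<Rightarrow> nat \<Rightarrow> real" where
  "prod_enc d enc = (\<lambda>(s, t). vconcat d (enc s) (enc t))"

definition bool_enc :: "bool \<Rightarrow> nat \<Rightarrow> real" where
  "bool_enc b = (\<lambda>i. if i = 0 \<and> b then 1 else 0)"

type_synonym fcn_params = "(nat \<Rightarrow> nat \<Rightarrow> real) \<times> (nat \<Rightarrow> real) \<times> (nat \<Rightarrow> nat \<Rightarrow> real) \<times> (nat \<Rightarrow> real)"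

definition relu :: "real \<Rightarrow> real" where
  "relu x = max 0 x"

definition fcn :: "nat \<Rightarrow> fcn_params \<Rightarrow> (nat \<Rightarrow> real) \<Rightarrow> nat \<Rightarrow> real" where
  "fcn d p X = (case p of (W1, B1, W2, B2) \<Rightarrow>
     (\<lambda>i. if i < d then
            (\<Sum>j<4*d. W2 i j * relu ((\<Sum>k<d. W1 j k * X k) + B1 j)) + B2 i
          else 0))"

fun resmlp_apply :: "nat \<Rightarrow> fcn_params list \<Rightarrow> (nat \<Rightarrow> real) \<Rightarrow> nat \<Rightarrow> real" where
  "resmlp_apply d [] X = X"
| "resmlp_apply d (p # ps) X = resmlp_apply d ps (\<lambda>i. X i + fcn d p X i)"

definition ResMLP :: "nat \<Rightarrow> nat \<Rightarrow> ((nat \<Rightarrow> real) \<Rightarrow> nat \<Rightarrow> real) set" where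
  "ResMLP d L = {F. \<exists>ps. length ps = L \<and> F = resmlp_apply d ps}"

definition representable ::
  "'a set \<Rightarrow> ('a \<Rightarrow> nat \<Rightarrow> real) \<Rightarrow> nat \<Rightarrow> ('b \<Rightarrow> nat \<Rightarrow> real) \<Rightarrow> nat \<Rightarrow>
   ('a \<Rightarrow> 'b) \<Rightarrow> nat \<Rightarrow> nat \<Rightarrow> bool" where
  "representable S encT dT encR dR f d L \<longleftrightarrow>
     d \<ge> max dT dR \<and> (\<exists>F\<in>ResMLP d L. \<forall>s\<in>S. encR (f s) = F (encT s))"

end

theory Submission
  imports Defs
begin

(* The first layer maps the concatenation of x and y to coord0 (l1_dist d x y): the hidden units
   relu X_m and relu (-X_m) cancel the residual stream, since relu (-t) - relu t = -t, while the
   units relu (X_m - X_(swap_halves d m)) add up to the sum of |x_k - y_k|. This distance vanishes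
   exactly on the diagonal, and as S is finite some c satisfies c z >= 1 for every off-diagonal
   distance z. The second layer outputs relu (1 - c z), which is 1 at z = 0 and 0 at every
   off-diagonal distance. *)

lemma sum_delta_mult:
  fixes f :: "'b \<Rightarrow> 'a::semiring_1"
  assumes "finite A"
  shows "(\<Sum>k\<in>A. of_bool (k = m) * f k) = (if m \<in> A then f m else 0)"
  using assms by simp

lemma sum_lessThan_add_split:
  fixes f :: "nat \<Rightarrow> 'a::comm_monoid_add"
  shows "(\<Sum>j<m + n. f j) = (\<Sum>j<m. f j) + (\<Sum>k<n. f (m + k))"
  by (induction n) (simp_all add: add.assoc)

lemma sum_lessThan_four_blocks:
  fixes f :: "nat \<Rightarrow> 'a::comm_monoid_add"
  shows "(\<Sum>j<4*n. f j) = (\<Sum>m<n. f m + f (n + m) + f (2*n + m) + f (3*n + m))"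
proof -
  have "4*n = n + (n + (n + n))"
    by simp
  then have "(\<Sum>j<4*n. f j) = (\<Sum>m<n. f m) + ((\<Sum>m<n. f (n + m))
      + ((\<Sum>m<n. f (n + (n + m))) + (\<Sum>m<n. f (n + (n + (n + m))))))"
    by (simp only: sum_lessThan_add_split)
  moreover have "n + (n + m) = 2*n + m" "n + (n + (n + m)) = 3*n + m" for m
    by simp_all
  ultimately show ?thesis
    by (simp add: sum.distrib add.assoc)
qed

lemma relu_neg_sub_relu: "relu (- x) - relu x = - x"
  by (simp add: relu_def)

lemma relu_add_relu_neg: "relu x + relu (- x) = \<bar>x\<bar>"
  by (simp add: relu_def)

lemma fcn_outside: "n \<le> i \<Longrightarrow> fcn n p X i = 0"
  by (cases p) (simp add: fcn_def)

definition residual :: "nat \<Rightarrow> fcn_params \<Rightarrow> (nat \<Rightarrow> real) \<Rightarrow> nat \<Rightarrow> real" where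
  "residual n p X = (\<lambda>i. X i + fcn n p X i)"

lemma resmlp_apply_two_layers: "resmlp_apply n [p, q] X = residual n q (residual n p X)"
  by (simp add: residual_def)

definition coord0 :: "real \<Rightarrow> nat \<Rightarrow> real" where
  "coord0 z = (\<lambda>i. if i = 0 then z else 0)"

lemma sum_mult_coord0:
  assumes "1 \<le> n"
  shows "(\<Sum>k<n. a k * coord0 z k) = a 0 * z"
proof -
  have "(\<Sum>k<n. a k * coord0 z k) = (\<Sum>k<n. of_bool (k = 0) * (a k * z))"
    by (intro sum.cong) (simp_all add: coord0_def)
  then show ?thesis using assms by (simp add: sum_delta_mult)
qed

definition distance_in :: "nat \<Rightarrow> (nat \<Rightarrow> nat) \<Rightarrow> nat \<Rightarrow> nat \<Rightarrow> real" where
  "distance_in n \<sigma> j k =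
    (if j < n then of_bool (k = j)
     else if j < 2*n then - of_bool (k = j - n)
     else if j < 3*n then of_bool (k = j - 2*n) - of_bool (k = \<sigma> (j - 2*n))
     else 0)"

definition distance_out :: "nat \<Rightarrow> nat \<Rightarrow> nat \<Rightarrow> real" where
  "distance_out n i j =
    (if j < n then - of_bool (j = i)
     else if j < 2*n then of_bool (j - n = i)
     else if j < 3*n then of_bool (i = 0)
     else 0)"

definition distance_layer :: "nat \<Rightarrow> (nat \<Rightarrow> nat) \<Rightarrow> fcn_params" where
  "distance_layer n \<sigma> = (distance_in n \<sigma>, \<lambda>_. 0, distance_out n, \<lambda>_. 0)"

lemma residual_distance_layer:
  assumes X: "supported_in n X" and \<sigma>: "\<And>m. m < n \<Longrightarrow> \<sigma> m < n"
  shows "residual n (distance_layer n \<sigma>) X = coord0 (\<Sum>m<n. relu (X m - X (\<sigma> m)))"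
proof
  fix i
  show "residual n (distance_layer n \<sigma>) X i = coord0 (\<Sum>m<n. relu (X m - X (\<sigma> m))) i"
  proof (cases "i < n")
    case True
    have hidden: "(\<Sum>k<n. distance_in n \<sigma> j k * X k) =
        (if j < n then X j else if j < 2*n then - X (j - n)
         else if j < 3*n then X (j - 2*n) - X (\<sigma> (j - 2*n)) else 0)" for j
      using \<sigma> by (auto simp: distance_in_def sum_delta_mult left_diff_distrib sum_subtractf sum_negf)
    have "fcn n (distance_layer n \<sigma>) X i =
        (\<Sum>m<n. - of_bool (m = i) * relu (X m) + of_bool (m = i) * relu (- X m)
                + of_bool (i = 0) * relu (X m - X (\<sigma> m)))"
      using True by (simp add: fcn_def distance_layer_def hidden sum_lessThan_four_blocks
          distance_out_def)
    also have "\<dots> = (\<Sum>m<n. of_bool (m = i) * (relu (- X m) - relu (X m))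
                + of_bool (i = 0) * relu (X m - X (\<sigma> m)))"
      by (simp add: algebra_simps)
    also have "\<dots> = (\<Sum>m<n. of_bool (m = i) * (- X m))
                      + of_bool (i = 0) * (\<Sum>m<n. relu (X m - X (\<sigma> m)))"
      by (simp only: relu_neg_sub_relu sum.distrib sum_distrib_left)
    also have "\<dots> = - X i + of_bool (i = 0) * (\<Sum>m<n. relu (X m - X (\<sigma> m)))"
      using True by (subst sum_delta_mult) simp_all
    finally show ?thesis by (simp add: residual_def coord0_def)
  next
    case False
    then show ?thesis using X by (simp add: residual_def coord0_def fcn_outside supported_in_def)
  qed
qed

definition swap_halves :: "nat \<Rightarrow> nat \<Rightarrow> nat" where
  "swap_halves d m = (if m < d then d + m else m - d)"

lemma swap_halves_less: "m < 2*d \<Longrightarrow> swap_halves d m < 2*d"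
  by (auto simp: swap_halves_def)

lemma sum_relu_swap_halves:
  "(\<Sum>m<2*d. relu (X m - X (swap_halves d m))) = (\<Sum>k<d. \<bar>X k - X (d + k)\<bar>)"
proof -
  have "(\<Sum>m<2*d. relu (X m - X (swap_halves d m)))
      = (\<Sum>k<d. relu (X k - X (d + k))) + (\<Sum>k<d. relu (X (d + k) - X k))"
    by (simp add: mult_2 sum_lessThan_add_split swap_halves_def)
  also have "\<dots> = (\<Sum>k<d. \<bar>X k - X (d + k)\<bar>)"
    by (simp add: sum.distrib[symmetric] relu_add_relu_neg[symmetric])
  finally show ?thesis .
qed

definition l1_dist :: "nat \<Rightarrow> (nat \<Rightarrow> real) \<Rightarrow> (nat \<Rightarrow> real) \<Rightarrow> real" where
  "l1_dist d x y = (\<Sum>k<d. \<bar>x k - y k\<bar>)"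

lemma l1_dist_nonneg: "0 \<le> l1_dist d x y"
  by (simp add: l1_dist_def sum_nonneg)

lemma l1_dist_eq_0_iff:
  assumes "supported_in d x" and "supported_in d y"
  shows "l1_dist d x y = 0 \<longleftrightarrow> x = y"
proof
  assume "l1_dist d x y = 0"
  then have "\<forall>k<d. x k = y k"
    by (simp add: l1_dist_def sum_nonneg_eq_0_iff)
  show "x = y"
  proof
    fix k
    show "x k = y k"
      using \<open>\<forall>k<d. x k = y k\<close> assms by (cases "k < d") (simp_all add: supported_in_def)
  qed
qed (simp add: l1_dist_def)

lemma residual_distance_layer_vconcat:
  assumes "supported_in d x" and "supported_in d y"
  shows "residual (2*d) (distance_layer (2*d) (swap_halves d)) (vconcat d x y)
    = coord0 (l1_dist d x y)"
proof -
  have "supported_in (2*d) (vconcat d x y)"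
    using assms by (simp add: supported_in_def vconcat_def)
  then have "residual (2*d) (distance_layer (2*d) (swap_halves d)) (vconcat d x y)
      = coord0 (\<Sum>k<d. \<bar>vconcat d x y k - vconcat d x y (d + k)\<bar>)"
    by (simp add: residual_distance_layer swap_halves_less sum_relu_swap_halves)
  then show ?thesis
    by (simp add: l1_dist_def vconcat_def)
qed

definition threshold_in :: "real \<Rightarrow> nat \<Rightarrow> nat \<Rightarrow> real" where
  "threshold_in c j k = of_bool (k = 0) * (if j = 0 then - c else of_bool (j = 1))"

definition threshold_out :: "nat \<Rightarrow> nat \<Rightarrow> real" where
  "threshold_out i j = of_bool (i = 0) * (of_bool (j = 0) - of_bool (j = 1))"

definition threshold_layer :: "real \<Rightarrow> fcn_params" where
  "threshold_layer c = (threshold_in c, \<lambda>j. of_bool (j = 0), threshold_out, \<lambda>_. 0)"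

lemma residual_threshold_layer:
  assumes "1 \<le> n" and "0 \<le> z"
  shows "residual n (threshold_layer c) (coord0 z) = coord0 (relu (1 - c * z))"
proof
  fix i
  show "residual n (threshold_layer c) (coord0 z) i = coord0 (relu (1 - c * z)) i"
  proof (cases "i < n")
    case True
    have hidden: "(\<Sum>k<n. threshold_in c j k * coord0 z k) + of_bool (j = 0) =
        (if j = 0 then 1 - c * z else of_bool (j = 1) * z)" for j
      using assms(1) by (simp add: sum_mult_coord0 threshold_in_def)
    have "fcn n (threshold_layer c) (coord0 z) i =
        of_bool (i = 0) * (\<Sum>j<4*n. (of_bool (j = 0) - of_bool (j = 1))
                                      * relu (if j = 0 then 1 - c * z else of_bool (j = 1) * z))"
      using True by (simp add: fcn_def threshold_layer_def threshold_out_def hidden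
          sum_distrib_left mult.assoc)
    also have "\<dots> = of_bool (i = 0) * (relu (1 - c * z) - relu z)"
      using assms(1) by (simp add: left_diff_distrib sum_subtractf sum_delta_mult)
    finally show ?thesis using assms(2) by (simp add: residual_def coord0_def relu_def)
  next
    case False
    then show ?thesis using assms(1) by (simp add: residual_def coord0_def fcn_outside)
  qed
qed

lemma bool_enc_eq_coord0: "bool_enc b = coord0 (of_bool b)"
  by (auto simp: bool_enc_def coord0_def)

lemma resmlp_equality_test:
  assumes "supported_in d x" and "supported_in d y" and "1 \<le> d"
    and "x \<noteq> y \<Longrightarrow> 1 \<le> c * l1_dist d x y"
  shows "resmlp_apply (2*d) [distance_layer (2*d) (swap_halves d), threshold_layer c] (vconcat d x y)
    = bool_enc (x = y)"
proof -
  have threshold: "relu (1 - c * l1_dist d x y) = of_bool (x = y)"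
  proof (cases "x = y")
    case True
    then show ?thesis by (simp add: l1_dist_def relu_def)
  next
    case False
    then show ?thesis using assms(4) by (simp add: relu_def)
  qed
  have "resmlp_apply (2*d) [distance_layer (2*d) (swap_halves d), threshold_layer c] (vconcat d x y)
      = residual (2*d) (threshold_layer c) (coord0 (l1_dist d x y))"
    by (simp only: resmlp_apply_two_layers residual_distance_layer_vconcat[OF assms(1,2)])
  also have "\<dots> = coord0 (relu (1 - c * l1_dist d x y))"
    using assms(3) by (simp add: residual_threshold_layer l1_dist_nonneg)
  finally show ?thesis
    by (simp add: threshold bool_enc_eq_coord0)
qed

lemma finite_positive_ex_scale:
  fixes Z :: "real set"
  assumes "finite Z" and "\<And>z. z \<in> Z \<Longrightarrow> 0 < z"
  shows "\<exists>c. \<forall>z\<in>Z. 1 \<le> c * z"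
proof (intro exI ballI)
  fix z assume "z \<in> Z"
  then have "1 / z \<le> (\<Sum>w\<in>Z. 1 / w)"
    using assms by (intro member_le_sum) (auto simp: less_imp_le)
  with \<open>z \<in> Z\<close> assms(2) show "1 \<le> (\<Sum>w\<in>Z. 1 / w) * z"
    by (simp add: divide_le_eq)
qed

lemma finite_ex_l1_separation_scale:
  assumes "finite E" and "\<And>x. x \<in> E \<Longrightarrow> supported_in d x"
  shows "\<exists>c. \<forall>x\<in>E. \<forall>y\<in>E. x \<noteq> y \<longrightarrow> 1 \<le> c * l1_dist d x y"
proof -
  let ?Z = "(\<lambda>(x, y). l1_dist d x y) ` {(x, y) \<in> E \<times> E. x \<noteq> y}"
  have "finite ?Z"
    using assms(1) by (auto intro: finite_subset[of _ "E \<times> E"])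
  moreover have "0 < z" if "z \<in> ?Z" for z
    using that assms(2) l1_dist_nonneg[of d] l1_dist_eq_0_iff[of d]
    by (fastforce simp: order_less_le)
  ultimately obtain c where "\<forall>z\<in>?Z. 1 \<le> c * z"
    using finite_positive_ex_scale by blast
  then show ?thesis
    by auto
qed

theorem proposition4:
  fixes S :: "'a set" and enc :: "'a \<Rightarrow> nat \<Rightarrow> real" and d :: nat
  assumes "local_type S enc d" and "d \<ge> 1"
  shows "representable (S \<times> S) (prod_enc d enc) (2 * d) bool_enc 1
           (\<lambda>(x, y). x = y) (2 * d) 2"
proof -
  have inj: "inj_on enc S" and supp: "\<And>s. s \<in> S \<Longrightarrow> supported_in d (enc s)"
    using assms(1) by (auto simp: local_type_def)
  obtain c where c: "\<forall>x\<in>enc ` S. \<forall>y\<in>enc ` S. x \<noteq> y \<longrightarrow> 1 \<le> c * l1_dist d x y"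
    using finite_ex_l1_separation_scale[of "enc ` S" d] assms(1) by (auto simp: local_type_def)
  let ?layers = "[distance_layer (2*d) (swap_halves d), threshold_layer c]"
  let ?net = "resmlp_apply (2*d) ?layers"
  have "?net \<in> ResMLP (2*d) 2"
    unfolding ResMLP_def by (intro CollectI exI[of _ ?layers]) simp
  moreover have "bool_enc ((\<lambda>(x, y). x = y) p) = ?net (prod_enc d enc p)" if pS: "p \<in> S \<times> S" for p
  proof -
    obtain s t where p: "p = (s, t)" and "s \<in> S" and "t \<in> S"
      using pS by blast
    then have "enc s = enc t \<longleftrightarrow> s = t"
      using inj by (auto dest: inj_onD)
    then show ?thesis
      using resmlp_equality_test[OF supp supp assms(2), of s t c] c p \<open>s \<in> S\<close> \<open>t \<in> S\<close>
      by (simp add: prod_enc_def)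
  qed
  moreover have "max (2 * d) 1 \<le> 2 * d"
    using assms(2) by simp
  ultimately show ?thesis
    unfolding representable_def by blast
qed

end
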